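(* Let $t>0$, $0<\delta<1$, $k>-t\frac{\ln\left(\frac{2}{1+\delta}-1\right)}{\ln(1+\delta)}$, and $w\ge0$. Then for all sufficiently large $m$, $$\frac{\left(\frac12+\frac12\left(1-\frac{k\ln m}{m}\right)^w\right)^m}{m^{-tw}+(1+\delta)^{-m}}<1.$$
   Context: $\ln$ denotes the natural logarithm. *)

theory Defs
  imports "HOL-Analysis.Analysis"
begin

end

theory Submission
  imports Defs "HOL-Real_Asymp.Real_Asymp"
begin

text \<open>Since \<open>(1 - \<delta>)(1 + \<delta>) < 1\<close>, the lower bound on \<open>k\<close> forces \<open>k > 2t\<close>. The numerator
  behaves like \<open>m\<^sup>-\<^sup>w\<^sup>k\<^sup>/\<^sup>2\<close>, because \<open>(1 - k ln m / m)\<^sup>w \<approx> 1 - w k ln m / m\<close>, so for \<open>w > 0\<close>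
  it is eventually below the first summand \<open>m\<^sup>-\<^sup>t\<^sup>w\<close> of the denominator; for \<open>w = 0\<close> both
  equal \<open>1\<close>. The positive second summand \<open>(1 + \<delta>)\<^sup>-\<^sup>m\<close> then makes the quotient strictly
  smaller than \<open>1\<close>.\<close>

lemma two_ln_less_neg_ln_two_div_minus_one:
  fixes \<delta> :: real
  assumes "0 < \<delta>" "\<delta> < 1"
  shows "2 * ln (1 + \<delta>) < - ln (2 / (1 + \<delta>) - 1)"
proof -
  have "2 / (1 + \<delta>) - 1 = (1 - \<delta>) / (1 + \<delta>)"
    using assms by (simp add: field_simps)
  then have "ln (2 / (1 + \<delta>) - 1) = ln (1 - \<delta>) - ln (1 + \<delta>)"
    using assms by (simp add: ln_div)
  moreover have "ln (1 - \<delta>) + ln (1 + \<delta>) < 0"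
  proof -
    have "ln (1 - \<delta>) + ln (1 + \<delta>) = ln ((1 - \<delta>) * (1 + \<delta>))"
      using assms by (simp add: ln_mult)
    also have "(1 - \<delta>) * (1 + \<delta>) = 1 - \<delta>\<^sup>2"
      by (simp add: algebra_simps power2_eq_square)
    also have "ln (1 - \<delta>\<^sup>2) < 0"
      using assms by (simp add: power_less_one_iff)
    finally show ?thesis .
  qed
  ultimately show ?thesis by linarith
qed

lemma mean_power_pow_growth_exponent:
  fixes k w :: real
  assumes "0 < k" "0 < w"
  shows "((\<lambda>m. m * ln (1/2 + 1/2 * (1 - k * ln m / m) powr w) / ln m) \<longlongrightarrow> - (w * k / 2)) at_top"
  using assms by real_asymp

lemma eventually_mean_power_pow_less:
  fixes k w c :: real
  assumes "0 < k" "0 < w" "c < w * k / 2"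
  shows "\<forall>\<^sub>F m in sequentially.
    (1/2 + 1/2 * (1 - k * ln (real m) / real m) powr w) ^ m < real m powr (- c)"
proof -
  have "((\<lambda>m. real m * ln (1/2 + 1/2 * (1 - k * ln (real m) / real m) powr w) / ln (real m))
          \<longlongrightarrow> - (w * k / 2)) sequentially"
    using filterlim_compose[OF mean_power_pow_growth_exponent[OF assms(1,2)]
                               filterlim_real_sequentially] .
  then have "\<forall>\<^sub>F m in sequentially.
      real m * ln (1/2 + 1/2 * (1 - k * ln (real m) / real m) powr w) / ln (real m) < - c"
    using assms(3) by (intro order_tendstoD(2)) auto
  then show ?thesis using eventually_gt_at_top[of 2]
  proof eventually_elim
    case (elim m)
    define b where "b = 1/2 + 1/2 * (1 - k * ln (real m) / real m) powr w"
    have "0 < b" unfolding b_def by (simp add: add_pos_nonneg)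
    have "0 < ln (real m)" using elim by simp
    then have "real m * ln b < - c * ln (real m)"
      using elim unfolding b_def[symmetric] by (simp add: field_simps)
    moreover have "b ^ m = exp (real m * ln b)"
      using \<open>0 < b\<close> by (simp add: exp_of_nat_mult)
    ultimately have "b ^ m < exp (- c * ln (real m))"
      by simp
    then show ?case using elim by (simp add: b_def powr_def mult.commute)
  qed
qed

text \<open>Eventual nonvanishing of the base is needed since \<open>0 powr 0 = 0\<close>.\<close>

lemma eventually_mean_power_zero_pow:
  fixes k :: real
  shows "\<forall>\<^sub>F m in sequentially. (1/2 + 1/2 * (1 - k * ln (real m) / real m) powr 0) ^ m = 1"
proof -
  have "((\<lambda>m::real. 1 - k * ln m / m) \<longlongrightarrow> 1) at_top" by real_asymp
  then have "((\<lambda>m. 1 - k * ln (real m) / real m) \<longlongrightarrow> 1) sequentially"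
    by (rule filterlim_compose[OF _ filterlim_real_sequentially])
  then have "\<forall>\<^sub>F m in sequentially. 1 - k * ln (real m) / real m \<noteq> 0"
    by (rule tendsto_imp_eventually_ne) simp
  then show ?thesis
    by eventually_elim (simp only: powr_zero_eq_one, simp)
qed

theorem lemma6:
  fixes t \<delta> k w :: real
  assumes "t > 0" and "0 < \<delta>" and "\<delta> < 1"
    and "k > - t * ln (2 / (1 + \<delta>) - 1) / ln (1 + \<delta>)"
    and "w \<ge> 0"
  shows "\<forall>\<^sub>F m in sequentially.
    (1/2 + 1/2 * (1 - k * ln (real m) / real m) powr w) ^ m
      / (real m powr (- t * w) + (1 + \<delta>) powr (- real m)) < 1"
proof -
  have "t * (2 * ln (1 + \<delta>)) < t * - ln (2 / (1 + \<delta>) - 1)"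
    using two_ln_less_neg_ln_two_div_minus_one[OF assms(2,3)] assms(1)
    by (rule mult_strict_left_mono)
  also have "\<dots> < k * ln (1 + \<delta>)"
    using assms(2,4) by (simp add: field_simps)
  finally have "2 * t < k"
    using assms(2) by (simp add: mult.assoc[symmetric])
  have numerator_bound: "\<forall>\<^sub>F m in sequentially.
      (1/2 + 1/2 * (1 - k * ln (real m) / real m) powr w) ^ m \<le> real m powr (- t * w)"
  proof (cases "w = 0")
    case True
    show ?thesis using eventually_mean_power_zero_pow[of k] eventually_gt_at_top[of 0]
      by eventually_elim (simp add: True)
  next
    case False
    then have "0 < w" "t * w < w * k / 2"
      using assms(5) \<open>2 * t < k\<close> by auto
    then show ?thesis
      using eventually_mean_power_pow_less[of k w "t * w"] \<open>2 * t < k\<close> assms(1)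
      by (auto elim: eventually_mono)
  qed
  then show ?thesis
  proof eventually_elim
    case (elim m)
    have "0 < (1 + \<delta>) powr (- real m)"
      using assms(2) by simp
    moreover have "0 \<le> (1/2 + 1/2 * (1 - k * ln (real m) / real m) powr w) ^ m"
      by (simp add: add_pos_nonneg)
    ultimately show ?case
      using elim by (simp only: divide_less_eq_1) linarith
  qed
qed

end
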